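(* Let $X$ be an infinite dimensional Banach lattice in which $\ell_\infty$ is finitely lattice representable. Then $X_L=\ell_\infty$ with equality of norms.
   Context: Banach lattices are real; disjoint means $|x|\wedge|y|=0$. $\ell_\infty$ is finitely lattice representable in $X$ if for every $n$ and $\varepsilon>0$ there are pairwise disjoint $x_1,\dots,x_n\in X$ with $\max_i|a_i|\le\|\sum a_ix_i\|_X\le(1+\varepsilon)\max_i|a_i|$ for all $a\in\mathbb R^n$. $\mathfrak B_n(X)$ is the set of $n$-tuples of pairwise disjoint norm-one elements of $X$; for $a\in\mathbb R^n$, $\Phi_n(a):=\inf\{\|\sum_{i=1}^n a_ix_i\|_X:(x_i)\in\mathfrak B_n(X)\}$ and $\|a\|_{X_L(n)}:=\inf\{\sum_{k\in F}\Phi_n(a^k):F\text{ finite}, a^k\in\mathbb R^n, a=\sum_{k\in F}a^k\}$; $X_L$ is the space of real sequences $a$ with $\|a\|_{X_L}:=\sup_n\|(a_i)_{i=1}^n\|_{X_L(n)}<\infty$. *)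

theory Defs
  imports "HOL-Analysis.Analysis"
begin

class banach_lattice = banach + lattice +
  assumes bl_add_mono: "x \<le> y \<Longrightarrow> x + z \<le> y + z"
    and bl_scale_mono: "x \<le> y \<Longrightarrow> 0 \<le> c \<Longrightarrow> c *\<^sub>R x \<le> c *\<^sub>R y"
    and bl_norm_mono: "sup x (- x) \<le> sup y (- y) \<Longrightarrow> norm x \<le> norm y"

definition labs :: "'a::banach_lattice \<Rightarrow> 'a" where
  "labs x = sup x (- x)"

definition ldisjoint :: "'a::banach_lattice \<Rightarrow> 'a \<Rightarrow> bool" where
  "ldisjoint x y \<longleftrightarrow> inf (labs x) (labs y) = 0"

definition infinite_dimensional :: "'a::real_vector itself \<Rightarrow> bool" where
  "infinite_dimensional (_ :: 'a itself) \<longleftrightarrow>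
     (\<forall>B :: 'a set. finite B \<longrightarrow> span B \<noteq> UNIV)"

text \<open>Vectors in R^n are represented as functions nat => real; only indices < n matter.
  The sup-norm of (a_0,...,a_{n-1}) is Max over {0} and the |a_i|.\<close>

definition maxnorm :: "nat \<Rightarrow> (nat \<Rightarrow> real) \<Rightarrow> real" where
  "maxnorm n a = Max (insert 0 ((\<lambda>i. \<bar>a i\<bar>) ` {..<n}))"

definition linfty_fin_lattice_representable :: "'a::banach_lattice itself \<Rightarrow> bool" where
  "linfty_fin_lattice_representable (_ :: 'a itself) \<longleftrightarrow>
     (\<forall>n. \<forall>\<epsilon>>0. \<exists>x :: nat \<Rightarrow> 'a.
        (\<forall>i<n. \<forall>j<n. i \<noteq> j \<longrightarrow> ldisjoint (x i) (x j)) \<and>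
        (\<forall>a :: nat \<Rightarrow> real. maxnorm n a \<le> norm (\<Sum>i<n. a i *\<^sub>R x i) \<and>
                        norm (\<Sum>i<n. a i *\<^sub>R x i) \<le> (1 + \<epsilon>) * maxnorm n a))"

definition disjoint_unit_tuples :: "nat \<Rightarrow> (nat \<Rightarrow> 'a::banach_lattice) set" where
  "disjoint_unit_tuples n = {x. (\<forall>i<n. norm (x i) = 1) \<and>
                               (\<forall>i<n. \<forall>j<n. i \<noteq> j \<longrightarrow> ldisjoint (x i) (x j))}"

definition Phi :: "'a::banach_lattice itself \<Rightarrow> nat \<Rightarrow> (nat \<Rightarrow> real) \<Rightarrow> real" where
  "Phi (_ :: 'a itself) n a =
     Inf ((\<lambda>x::nat \<Rightarrow> 'a. norm (\<Sum>i<n. a i *\<^sub>R x i)) ` disjoint_unit_tuples n)"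

definition XL_norm_n :: "'a::banach_lattice itself \<Rightarrow> nat \<Rightarrow> (nat \<Rightarrow> real) \<Rightarrow> real" where
  "XL_norm_n T n a =
     Inf {(\<Sum>k\<in>F. Phi T n (c k)) | (F :: nat set) (c :: nat \<Rightarrow> nat \<Rightarrow> real).
            finite F \<and> (\<forall>i<n. a i = (\<Sum>k\<in>F. c k i))}"

definition in_XL :: "'a::banach_lattice itself \<Rightarrow> (nat \<Rightarrow> real) \<Rightarrow> bool" where
  "in_XL T a \<longleftrightarrow> bdd_above (range (\<lambda>n. XL_norm_n T n a))"

definition XL_norm :: "'a::banach_lattice itself \<Rightarrow> (nat \<Rightarrow> real) \<Rightarrow> real" where
  "XL_norm T a = (SUP n. XL_norm_n T n a)"

end

theory Submission
  imports Defs
begin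

text \<open>Disjointness forces \<open>\<bar>a\<^sub>j x\<^sub>j\<bar> \<le> \<bar>\<Sum>\<^sub>i a\<^sub>i x\<^sub>i\<bar>\<close>, so by monotonicity of the lattice norm
  \<open>\<Phi>\<^sub>n(a) \<ge> max\<^sub>i \<bar>a\<^sub>i\<bar>\<close> on every disjoint unit tuple; the almost isometric copies of
  \<open>\<ell>\<^sub>\<infinity>\<^sup>n\<close>, normalised, give the reverse inequality up to \<open>\<epsilon>\<close>. Hence \<open>\<Phi>\<^sub>n\<close> is the max norm,
  which is already a norm, so the convexification defining \<open>X\<^sub>L(n)\<close> does not change it,
  and taking the supremum over \<open>n\<close> yields the sup norm of \<open>\<ell>\<^sub>\<infinity>\<close>.\<close>

lemma bl_add_le_add_iff_right: "x + z \<le> y + (z::'a::banach_lattice) \<longleftrightarrow> x \<le> y"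
proof
  assume "x + z \<le> y + z"
  from bl_add_mono[OF this, of "-z"] show "x \<le> y" by simp
qed (rule bl_add_mono)

lemma bl_add_mono_both: "a \<le> b \<Longrightarrow> c \<le> d \<Longrightarrow> a + c \<le> b + (d::'a::banach_lattice)"
  using bl_add_mono[of a b c] bl_add_mono[of c d b] by (simp add: add.commute order_trans)

lemma bl_inf_add_distrib: "inf x y + z = inf (x + z) (y + (z::'a::banach_lattice))"
proof (rule antisym)
  have "inf (x + z) (y + z) - z \<le> inf x y"
    using bl_add_le_add_iff_right[of "inf (x + z) (y + z) - z" z x]
          bl_add_le_add_iff_right[of "inf (x + z) (y + z) - z" z y] by simp
  thus "inf (x + z) (y + z) \<le> inf x y + z"
    using bl_add_le_add_iff_right[of "inf (x + z) (y + z) - z" z "inf x y"] by simp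
qed (simp add: bl_add_le_add_iff_right)

lemma bl_inf_add_le_add_inf:
  fixes w p q :: "'a::banach_lattice"
  assumes "0 \<le> w" "0 \<le> p" "0 \<le> q"
  shows "inf w (p + q) \<le> inf w p + inf w q"
proof -
  have "inf w (p + q) \<le> inf (w + w) (w + q)"
    using bl_add_mono_both[OF order.refl[of w] assms(1)]
          bl_add_mono_both[OF order.refl[of w] assms(3)]
    by (simp add: le_infI1)
  also have "\<dots> = w + inf w q" using bl_inf_add_distrib[of w q w] by (simp add: add.commute)
  finally have w: "inf w (p + q) \<le> w + inf w q" .
  have "inf w (p + q) \<le> inf (p + w) (p + q)"
    using bl_add_mono_both[OF assms(2) order.refl[of w]] by (simp add: le_infI1)
  also have "\<dots> = p + inf w q" using bl_inf_add_distrib[of w q p] by (simp add: add.commute)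
  finally have p: "inf w (p + q) \<le> p + inf w q" .
  from w p have "inf w (p + q) \<le> inf (w + inf w q) (p + inf w q)" by simp
  also have "\<dots> = inf w p + inf w q" using bl_inf_add_distrib[of w p "inf w q"] by simp
  finally show ?thesis .
qed

lemma bl_scaleR_sup:
  fixes x y :: "'a::banach_lattice"
  assumes "0 \<le> c"
  shows "c *\<^sub>R sup x y = sup (c *\<^sub>R x) (c *\<^sub>R y)"
proof (cases "c = 0")
  case False
  hence c: "0 < c" using assms by simp
  show ?thesis
  proof (rule antisym)
    have "sup x y \<le> inverse c *\<^sub>R sup (c *\<^sub>R x) (c *\<^sub>R y)"
      using bl_scale_mono[of "c *\<^sub>R x" "sup (c *\<^sub>R x) (c *\<^sub>R y)" "inverse c"]
            bl_scale_mono[of "c *\<^sub>R y" "sup (c *\<^sub>R x) (c *\<^sub>R y)" "inverse c"] c by simp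
    from bl_scale_mono[OF this, of c] c
    show "c *\<^sub>R sup x y \<le> sup (c *\<^sub>R x) (c *\<^sub>R y)" by simp
  next
    show "sup (c *\<^sub>R x) (c *\<^sub>R y) \<le> c *\<^sub>R sup x y"
      using bl_scale_mono[of x "sup x y" c] bl_scale_mono[of y "sup x y" c] assms by simp
  qed
qed simp

lemma bl_scaleR_inf:
  fixes x y :: "'a::banach_lattice"
  assumes "0 \<le> c"
  shows "c *\<^sub>R inf x y = inf (c *\<^sub>R x) (c *\<^sub>R y)"
proof (cases "c = 0")
  case False
  hence c: "0 < c" using assms by simp
  show ?thesis
  proof (rule antisym)
    show "c *\<^sub>R inf x y \<le> inf (c *\<^sub>R x) (c *\<^sub>R y)"
      using bl_scale_mono[of "inf x y" x c] bl_scale_mono[of "inf x y" y c] assms by simp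
  next
    have "inverse c *\<^sub>R inf (c *\<^sub>R x) (c *\<^sub>R y) \<le> inf x y"
      using bl_scale_mono[of "inf (c *\<^sub>R x) (c *\<^sub>R y)" "c *\<^sub>R x" "inverse c"]
            bl_scale_mono[of "inf (c *\<^sub>R x) (c *\<^sub>R y)" "c *\<^sub>R y" "inverse c"] c by simp
    from bl_scale_mono[OF this, of c] c
    show "inf (c *\<^sub>R x) (c *\<^sub>R y) \<le> c *\<^sub>R inf x y" by simp
  qed
qed simp

lemma bl_scaleR_right_mono:
  fixes p :: "'a::banach_lattice"
  assumes "a \<le> b" "0 \<le> p"
  shows "a *\<^sub>R p \<le> b *\<^sub>R p"
proof -
  have "(b - a) *\<^sub>R 0 \<le> (b - a) *\<^sub>R p" by (rule bl_scale_mono) (use assms in auto)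
  hence "0 + a *\<^sub>R p \<le> (b - a) *\<^sub>R p + a *\<^sub>R p" by (intro bl_add_mono) simp
  thus ?thesis by (simp add: scaleR_left_diff_distrib)
qed

lemma labs_ge_self: "x \<le> labs x"
  and labs_ge_minus: "- x \<le> labs x"
  by (auto simp: labs_def)

lemma labs_nonneg: "0 \<le> labs (x::'a::banach_lattice)"
proof -
  have "0 \<le> labs x + labs x"
    using bl_add_mono_both[OF labs_ge_self labs_ge_minus, of x x] by simp
  from bl_scale_mono[OF this, of "1/2"] show ?thesis
    by (simp add: scaleR_add_right[symmetric] scaleR_left_distrib[symmetric])
qed

lemma labs_zero [simp]: "labs (0::'a::banach_lattice) = 0"
  by (simp add: labs_def)

lemma labs_scaleR: "labs (c *\<^sub>R x) = \<bar>c\<bar> *\<^sub>R labs (x::'a::banach_lattice)"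
proof -
  have "labs (c *\<^sub>R x) = labs (\<bar>c\<bar> *\<^sub>R x)"
    by (cases "0 \<le> c") (simp_all add: labs_def sup_commute)
  thus ?thesis by (simp add: labs_def bl_scaleR_sup)
qed

lemma labs_add_le: "labs (x + y) \<le> labs x + labs (y::'a::banach_lattice)"
  using bl_add_mono_both[OF labs_ge_self labs_ge_self, of x y]
        bl_add_mono_both[OF labs_ge_minus labs_ge_minus, of x y]
  by (simp add: labs_def)

lemma ldisjoint_iff_inf_le_zero: "ldisjoint u v \<longleftrightarrow> inf (labs u) (labs v) \<le> 0"
  by (simp add: ldisjoint_def eq_iff labs_nonneg)

lemma ldisjoint_imp_labs_le_labs_add:
  fixes u v :: "'a::banach_lattice"
  assumes "ldisjoint u v"
  shows "labs u \<le> labs (u + v)"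
proof -
  have "labs u \<le> labs (u + v) + labs v"
    using bl_add_mono_both[OF labs_ge_self[of "u + v"] labs_ge_minus[of v]]
          bl_add_mono_both[OF labs_ge_minus[of "u + v"] labs_ge_self[of v]]
    by (simp add: labs_def)
  hence "labs u = inf (labs u) (labs (u + v) + labs v)" by (simp add: inf_absorb1)
  also have "\<dots> \<le> inf (labs u) (labs (u + v)) + inf (labs u) (labs v)"
    by (rule bl_inf_add_le_add_inf[OF labs_nonneg labs_nonneg labs_nonneg])
  also have "\<dots> = inf (labs u) (labs (u + v))"
    using assms by (simp add: ldisjoint_def)
  finally show ?thesis by (simp add: le_infE)
qed

lemma ldisjoint_add_right:
  fixes u v w :: "'a::banach_lattice"
  assumes "ldisjoint u v" "ldisjoint u w"
  shows "ldisjoint u (v + w)"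
proof -
  have "inf (labs u) (labs (v + w)) \<le> inf (labs u) (labs v + labs w)"
    using labs_add_le[of v w] by (meson inf_mono order_refl)
  also have "\<dots> \<le> inf (labs u) (labs v) + inf (labs u) (labs w)"
    by (rule bl_inf_add_le_add_inf[OF labs_nonneg labs_nonneg labs_nonneg])
  also have "\<dots> = 0" using assms by (simp add: ldisjoint_def)
  finally show ?thesis by (simp add: ldisjoint_iff_inf_le_zero)
qed

lemma ldisjoint_sum_right:
  fixes u :: "'a::banach_lattice"
  assumes "finite S" "\<And>i. i \<in> S \<Longrightarrow> ldisjoint u (f i)"
  shows "ldisjoint u (sum f S)"
  using assms
proof (induction S rule: finite_induct)
  case empty
  show ?case by (simp add: ldisjoint_def inf_absorb2 labs_nonneg)
qed (simp add: ldisjoint_add_right)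

lemma ldisjoint_scaleR:
  fixes x y :: "'a::banach_lattice"
  assumes "ldisjoint x y"
  shows "ldisjoint (a *\<^sub>R x) (b *\<^sub>R y)"
proof -
  define t where "t = \<bar>a\<bar> + \<bar>b\<bar>"
  have t: "0 \<le> t" "\<bar>a\<bar> \<le> t" "\<bar>b\<bar> \<le> t" by (auto simp: t_def)
  have "inf (labs (a *\<^sub>R x)) (labs (b *\<^sub>R y)) \<le> inf (t *\<^sub>R labs x) (t *\<^sub>R labs y)"
    unfolding labs_scaleR
    by (rule inf_mono; rule bl_scaleR_right_mono[OF _ labs_nonneg]; simp add: t)
  also have "\<dots> = t *\<^sub>R inf (labs x) (labs y)" by (simp add: bl_scaleR_inf[OF t(1)])
  also have "\<dots> = 0" using assms by (simp add: ldisjoint_def)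
  finally show ?thesis by (simp add: ldisjoint_iff_inf_le_zero)
qed

lemma norm_le_norm_sum_pairwise_ldisjoint:
  fixes x :: "nat \<Rightarrow> 'a::banach_lattice"
  assumes disj: "\<forall>i<n. \<forall>j<n. i \<noteq> j \<longrightarrow> ldisjoint (x i) (x j)" and j: "j < n"
  shows "norm (a j *\<^sub>R x j) \<le> norm (\<Sum>i<n. a i *\<^sub>R x i)"
proof -
  have split: "(\<Sum>i<n. a i *\<^sub>R x i) = a j *\<^sub>R x j + (\<Sum>i\<in>{..<n} - {j}. a i *\<^sub>R x i)"
    using j by (simp add: sum.remove)
  have "ldisjoint (a j *\<^sub>R x j) (\<Sum>i\<in>{..<n} - {j}. a i *\<^sub>R x i)"
    by (rule ldisjoint_sum_right) (use disj j in \<open>auto intro: ldisjoint_scaleR\<close>)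
  from ldisjoint_imp_labs_le_labs_add[OF this]
  have "labs (a j *\<^sub>R x j) \<le> labs (\<Sum>i<n. a i *\<^sub>R x i)" by (simp add: split)
  thus ?thesis by (intro bl_norm_mono) (simp add: labs_def)
qed

lemma maxnorm_le_iff: "maxnorm n a \<le> M \<longleftrightarrow> 0 \<le> M \<and> (\<forall>i<n. \<bar>a i\<bar> \<le> M)"
  unfolding maxnorm_def by (subst Max_le_iff) auto

lemma abs_le_maxnorm: "i < n \<Longrightarrow> \<bar>a i\<bar> \<le> maxnorm n a"
  and maxnorm_nonneg: "0 \<le> maxnorm n a"
  unfolding maxnorm_def by (auto intro: Max_ge)

lemma maxnorm_sum_le:
  assumes "finite F"
  shows "maxnorm n (\<lambda>i. \<Sum>k\<in>F. c k i) \<le> (\<Sum>k\<in>F. maxnorm n (c k))"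
proof -
  have "\<bar>\<Sum>k\<in>F. c k i\<bar> \<le> (\<Sum>k\<in>F. maxnorm n (c k))" if "i < n" for i
  proof -
    have "\<bar>\<Sum>k\<in>F. c k i\<bar> \<le> (\<Sum>k\<in>F. \<bar>c k i\<bar>)" by (rule sum_abs)
    also have "\<dots> \<le> (\<Sum>k\<in>F. maxnorm n (c k))" by (rule sum_mono) (rule abs_le_maxnorm[OF that])
    finally show ?thesis .
  qed
  thus ?thesis by (simp add: maxnorm_le_iff sum_nonneg maxnorm_nonneg)
qed

lemma maxnorm_le_norm_sum_disjoint_unit_tuple:
  fixes x :: "nat \<Rightarrow> 'a::banach_lattice"
  assumes "x \<in> disjoint_unit_tuples n"
  shows "maxnorm n a \<le> norm (\<Sum>i<n. a i *\<^sub>R x i)"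
  using norm_le_norm_sum_pairwise_ldisjoint[of n x _ a] assms
  by (auto simp: maxnorm_le_iff disjoint_unit_tuples_def)

text \<open>The representing vectors have norm at least 1 (test with a unit vector \<open>a\<close>);
  normalising them only shrinks the coefficients, so the upper estimate survives.\<close>

lemma exists_almost_isometric_disjoint_unit_tuple:
  assumes rep: "linfty_fin_lattice_representable TYPE('a)" and e: "0 < e"
  obtains y :: "nat \<Rightarrow> 'a::banach_lattice" where "y \<in> disjoint_unit_tuples n"
    and "\<And>a. norm (\<Sum>i<n. a i *\<^sub>R y i) \<le> (1 + e) * maxnorm n a"
proof -
  obtain x :: "nat \<Rightarrow> 'a" where disj: "\<forall>i<n. \<forall>j<n. i \<noteq> j \<longrightarrow> ldisjoint (x i) (x j)"
    and bnd: "\<And>a. maxnorm n a \<le> norm (\<Sum>i<n. a i *\<^sub>R x i) \<and>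
                   norm (\<Sum>i<n. a i *\<^sub>R x i) \<le> (1 + e) * maxnorm n a"
    using rep e unfolding linfty_fin_lattice_representable_def by blast
  have nx: "1 \<le> norm (x i)" if i: "i < n" for i
  proof -
    define d where "d = (\<lambda>k::nat. if k = i then 1 else (0::real))"
    have "1 \<le> maxnorm n d" using abs_le_maxnorm[OF i, of d] by (simp add: d_def)
    also have "\<dots> \<le> norm (\<Sum>k<n. d k *\<^sub>R x k)" using bnd by blast
    also have "(\<Sum>k<n. d k *\<^sub>R x k) = (\<Sum>k<n. if k = i then x k else 0)"
      by (rule sum.cong) (auto simp: d_def)
    also have "\<dots> = x i" using i by simp
    finally show ?thesis .
  qed
  define y where "y = (\<lambda>i. inverse (norm (x i)) *\<^sub>R x i)"
  have "norm (y i) = 1" if "i < n" for i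
  proof -
    have "norm (x i) \<noteq> 0" using nx[OF that] by linarith
    thus ?thesis by (simp add: y_def)
  qed
  with disj have "y \<in> disjoint_unit_tuples n"
    by (simp add: disjoint_unit_tuples_def y_def ldisjoint_scaleR)
  moreover have "norm (\<Sum>i<n. a i *\<^sub>R y i) \<le> (1 + e) * maxnorm n a" for a
  proof -
    define b where "b = (\<lambda>i. a i / norm (x i))"
    have "\<bar>b i\<bar> \<le> maxnorm n a" if "i < n" for i
    proof -
      have "\<bar>b i\<bar> \<le> \<bar>a i\<bar>"
        using nx[OF that] by (simp add: b_def abs_div divide_le_eq mult_le_cancel_left1)
      with abs_le_maxnorm[OF that, of a] show ?thesis by linarith
    qed
    hence "maxnorm n b \<le> maxnorm n a" by (simp add: maxnorm_le_iff maxnorm_nonneg)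
    hence "(1 + e) * maxnorm n b \<le> (1 + e) * maxnorm n a" using e by simp
    moreover have "(\<Sum>i<n. a i *\<^sub>R y i) = (\<Sum>i<n. b i *\<^sub>R x i)"
      by (simp add: y_def b_def divide_inverse)
    ultimately show ?thesis using bnd[of b] by simp
  qed
  ultimately show thesis by (rule that)
qed

lemma Phi_eq_maxnorm:
  assumes rep: "linfty_fin_lattice_representable TYPE('a::banach_lattice)"
  shows "Phi TYPE('a) n a = maxnorm n a"
proof -
  let ?S = "(\<lambda>x::nat \<Rightarrow> 'a. norm (\<Sum>i<n. a i *\<^sub>R x i)) ` disjoint_unit_tuples n"
  obtain y0 :: "nat \<Rightarrow> 'a" where "y0 \<in> disjoint_unit_tuples n"
    using exists_almost_isometric_disjoint_unit_tuple[OF rep, of 1 n] by auto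
  hence "?S \<noteq> {}" by auto
  hence lower: "maxnorm n a \<le> Inf ?S"
    by (rule cInf_greatest) (auto intro: maxnorm_le_norm_sum_disjoint_unit_tuple)
  have upper: "Inf ?S \<le> (1 + e) * maxnorm n a" if e: "0 < e" for e
  proof -
    obtain y :: "nat \<Rightarrow> 'a" where y: "y \<in> disjoint_unit_tuples n"
      and yb: "norm (\<Sum>i<n. a i *\<^sub>R y i) \<le> (1 + e) * maxnorm n a"
      using exists_almost_isometric_disjoint_unit_tuple[OF rep e, of n] by metis
    have "Inf ?S \<le> norm (\<Sum>i<n. a i *\<^sub>R y i)"
      using y by (auto intro!: cInf_lower bdd_belowI[of _ 0])
    with yb show ?thesis by linarith
  qed
  have "Inf ?S \<le> maxnorm n a"
  proof (rule field_le_epsilon)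
    fix d :: real assume d: "0 < d"
    have "Inf ?S \<le> (1 + d / (maxnorm n a + 1)) * maxnorm n a"
      using upper d maxnorm_nonneg[of n a] by simp
    also have "\<dots> \<le> maxnorm n a + d"
      using d maxnorm_nonneg[of n a] by (simp add: field_simps)
    finally show "Inf ?S \<le> maxnorm n a + d" .
  qed
  with lower show ?thesis unfolding Phi_def by simp
qed

lemma XL_norm_n_eq_maxnorm:
  assumes rep: "linfty_fin_lattice_representable TYPE('a::banach_lattice)"
  shows "XL_norm_n TYPE('a) n a = maxnorm n a"
  unfolding XL_norm_n_def Phi_eq_maxnorm[OF rep]
proof (rule cInf_eq_minimum)
  show "maxnorm n a \<in> {\<Sum>k\<in>F. maxnorm n (c k) |(F :: nat set) c.
                          finite F \<and> (\<forall>i<n. a i = (\<Sum>k\<in>F. c k i))}"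
    by (rule CollectI, rule exI[of _ "{0}"], rule exI[of _ "\<lambda>_. a"]) simp
next
  fix s assume "s \<in> {\<Sum>k\<in>F. maxnorm n (c k) |(F :: nat set) c.
                     finite F \<and> (\<forall>i<n. a i = (\<Sum>k\<in>F. c k i))}"
  then obtain F :: "nat set" and c where s: "s = (\<Sum>k\<in>F. maxnorm n (c k))"
    and F: "finite F" and a: "\<forall>i<n. a i = (\<Sum>k\<in>F. c k i)"
    by blast
  have "maxnorm n a = maxnorm n (\<lambda>i. \<Sum>k\<in>F. c k i)"
    using a by (simp add: maxnorm_def)
  also have "\<dots> \<le> s" using maxnorm_sum_le[OF F] s by simp
  finally show "maxnorm n a \<le> s" .
qed

lemma bdd_above_range_maxnorm_iff:
  "bdd_above (range (\<lambda>n. maxnorm n a)) \<longleftrightarrow> bdd_above (range (\<lambda>i. \<bar>a i\<bar>))"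
proof
  assume "bdd_above (range (\<lambda>n. maxnorm n a))"
  then obtain B where "\<And>n. maxnorm n a \<le> B" by (auto simp: bdd_above_def)
  hence "\<bar>a i\<bar> \<le> B" for i using abs_le_maxnorm[of i "Suc i" a] by (meson lessI order_trans)
  thus "bdd_above (range (\<lambda>i. \<bar>a i\<bar>))" by (intro bdd_aboveI2)
next
  assume "bdd_above (range (\<lambda>i. \<bar>a i\<bar>))"
  then obtain B where B: "\<And>i. \<bar>a i\<bar> \<le> B" by (auto simp: bdd_above_def)
  moreover have "0 \<le> B" using B[of 0] by linarith
  ultimately have "maxnorm n a \<le> B" for n by (simp add: maxnorm_le_iff)
  thus "bdd_above (range (\<lambda>n. maxnorm n a))" by (intro bdd_aboveI2)
qed

lemma SUP_maxnorm_eq: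
  assumes bdd: "bdd_above (range (\<lambda>i. \<bar>a i\<bar>))"
  shows "(SUP n. maxnorm n a) = (SUP i. \<bar>a i\<bar>)"
proof (rule antisym)
  have "0 \<le> (SUP i. \<bar>a i\<bar>)" using cSUP_upper[OF UNIV_I bdd, of 0] by linarith
  thus "(SUP n. maxnorm n a) \<le> (SUP i. \<bar>a i\<bar>)"
    using cSUP_upper[OF UNIV_I bdd] by (intro cSUP_least) (simp_all add: maxnorm_le_iff)
next
  have bdd': "bdd_above (range (\<lambda>n. maxnorm n a))" using bdd by (simp add: bdd_above_range_maxnorm_iff)
  show "(SUP i. \<bar>a i\<bar>) \<le> (SUP n. maxnorm n a)"
  proof (rule cSUP_least)
    fix i
    have "\<bar>a i\<bar> \<le> maxnorm (Suc i) a" by (rule abs_le_maxnorm) simp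
    also have "\<dots> \<le> (SUP n. maxnorm n a)" by (rule cSUP_upper[OF UNIV_I bdd'])
    finally show "\<bar>a i\<bar> \<le> (SUP n. maxnorm n a)" .
  qed simp
qed

theorem mainTheorem16:
  assumes "infinite_dimensional TYPE('a::banach_lattice)"
    and "linfty_fin_lattice_representable TYPE('a)"
  shows "\<forall>a :: nat \<Rightarrow> real.
           (in_XL TYPE('a) a \<longleftrightarrow> bdd_above (range (\<lambda>i. \<bar>a i\<bar>))) \<and>
           (in_XL TYPE('a) a \<longrightarrow> XL_norm TYPE('a) a = (SUP i. \<bar>a i\<bar>))"
proof -
  have "XL_norm_n TYPE('a) = maxnorm"
    using XL_norm_n_eq_maxnorm[OF assms(2)] by blast
  thus ?thesis
    unfolding in_XL_def XL_norm_def
    by (simp add: bdd_above_range_maxnorm_iff SUP_maxnorm_eq)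
qed

end
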